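(* Let $D_{\mathrm{jnt}}$ be any distribution of $(\mathsf X,\bar{\mathsf Y},\mathsf Y)$ on $\mathcal X\times\{0,1\}\times\{0,1\}$, let $c,\bar c\in[0,1]$ and $\bar D\in\{\bar D_{\mathrm{DP}},\bar D_{\mathrm{EO}}\}$. For $\tau\ge0$ let $$V(\tau)=\inf\{\mathrm{CS}(f;D,c)\ :\ f\colon\mathcal X\to[0,1]\text{ measurable},\ \mathrm{CS}^\diamond(f;\bar D,\bar c)\ge\tau\}$$ and $F(\tau)=V(\tau)-V(0)$ (the fairness frontier). Then $F$ is convex on the set $T=\{\tau\ge0:\text{the constraint set above is nonempty}\}$.
   Context: $D$ is the law of $(\mathsf X,\mathsf Y)$, $\bar D_{\mathrm{DP}}$ the law of $(\mathsf X,\bar{\mathsf Y})$, $\bar D_{\mathrm{EO}}$ the law of $(\mathsf X,\bar{\mathsf Y})$ conditional on $\mathsf Y=1$. A randomised classifier $f\colon\mathcal X\to[0,1]$ predicts $1$ on $x$ with probability $f(x)$. For a distribution $E$ of $(\mathsf X,\mathsf Z)$ on $\mathcal X\times\{0,1\}$ with $p=\Pr(\mathsf Z=1)$: $\mathrm{FNR}(f;E)=\mathbb E_{\mathsf X\mid\mathsf Z=1}[1-f(\mathsf X)]$, $\mathrm{FPR}(f;E)=\mathbb E_{\mathsf X\mid\mathsf Z=0}[f(\mathsf X)]$, $\mathrm{CS}(f;E,c)=p(1-c)\,\mathrm{FNR}(f;E)+(1-p)c\,\mathrm{FPR}(f;E)$, and $\mathrm{CS}^\diamond(f;E,c)=\min\big(\mathrm{CS}(f;E,c),\mathrm{CS}(1-f;E,c)\big)$.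 *)

theory Defs
  imports "HOL-Probability.Probability"
begin

text \<open>Distributions E of (X, Z) on X x {0,1} are measures on MX (x) count_space UNIV,
  with Z encoded as a boolean (True = 1).\<close>

definition pZ :: "('x \<times> bool) measure \<Rightarrow> real" where
  "pZ E = measure E {z \<in> space E. snd z}"

definition FNR :: "('x \<Rightarrow> real) \<Rightarrow> ('x \<times> bool) measure \<Rightarrow> real" where
  "FNR f E = (\<integral>z. (1 - f (fst z)) * indicator {z. snd z} z \<partial>E) / pZ E"

definition FPR :: "('x \<Rightarrow> real) \<Rightarrow> ('x \<times> bool) measure \<Rightarrow> real" where
  "FPR f E = (\<integral>z. f (fst z) * indicator {z. \<not> snd z} z \<partial>E) / (1 - pZ E)"

definition CS :: "('x \<Rightarrow> real) \<Rightarrow> ('x \<times> bool) measure \<Rightarrow> real \<Rightarrow> real" where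
  "CS f E c = pZ E * (1 - c) * FNR f E + (1 - pZ E) * c * FPR f E"

definition CSd :: "('x \<Rightarrow> real) \<Rightarrow> ('x \<times> bool) measure \<Rightarrow> real \<Rightarrow> real" where
  "CSd f E c = min (CS f E c) (CS (\<lambda>x. 1 - f x) E c)"

definition D_of :: "'x measure \<Rightarrow> ('x \<times> bool \<times> bool) measure \<Rightarrow> ('x \<times> bool) measure" where
  "D_of MX Dj = distr Dj (MX \<Otimes>\<^sub>M count_space UNIV) (\<lambda>(x, yb, y). (x, y))"

definition D_DP :: "'x measure \<Rightarrow> ('x \<times> bool \<times> bool) measure \<Rightarrow> ('x \<times> bool) measure" where
  "D_DP MX Dj = distr Dj (MX \<Otimes>\<^sub>M count_space UNIV) (\<lambda>(x, yb, y). (x, yb))"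

definition D_EO :: "'x measure \<Rightarrow> ('x \<times> bool \<times> bool) measure \<Rightarrow> ('x \<times> bool) measure" where
  "D_EO MX Dj = distr (uniform_measure Dj {w \<in> space Dj. snd (snd w)})
                      (MX \<Otimes>\<^sub>M count_space UNIV) (\<lambda>(x, yb, y). (x, yb))"

definition classifier :: "'x measure \<Rightarrow> ('x \<Rightarrow> real) \<Rightarrow> bool" where
  "classifier MX f \<longleftrightarrow> f \<in> borel_measurable MX \<and> (\<forall>x \<in> space MX. 0 \<le> f x \<and> f x \<le> 1)"

definition feasible :: "'x measure \<Rightarrow> ('x \<times> bool) measure \<Rightarrow> real \<Rightarrow> real \<Rightarrow> ('x \<Rightarrow> real) set" where
  "feasible MX Db cb \<tau> = {f. classifier MX f \<and> CSd f Db cb \<ge> \<tau>}"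

definition V :: "'x measure \<Rightarrow> ('x \<times> bool) measure \<Rightarrow> real \<Rightarrow> ('x \<times> bool) measure \<Rightarrow> real \<Rightarrow> real \<Rightarrow> real" where
  "V MX D c Db cb \<tau> = Inf ((\<lambda>f. CS f D c) ` feasible MX Db cb \<tau>)"

definition frontier :: "'x measure \<Rightarrow> ('x \<times> bool) measure \<Rightarrow> real \<Rightarrow> ('x \<times> bool) measure \<Rightarrow> real \<Rightarrow> real \<Rightarrow> real" where
  "frontier MX D c Db cb \<tau> = V MX D c Db cb \<tau> - V MX D c Db cb 0"

end

theory Submission
  imports Defs
begin

text \<open>The cost CS is affine in the classifier, and a convex combination of two classifiers is again
  a classifier; since CSd is a minimum of two affine functionals, it is concave. Hence the convex
  combination of a classifier feasible at level \<tau> and one feasible at level \<tau>' is feasible at the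
  combined level, with the combined cost. Taking infima makes V convex on the set of levels where
  the constraint can be met, and the frontier is V shifted by the constant V 0.\<close>

definition finite_law_on :: "'x measure \<Rightarrow> ('x \<times> bool) measure \<Rightarrow> bool" where
  "finite_law_on MX E \<longleftrightarrow> finite_measure E \<and> sets E = sets (MX \<Otimes>\<^sub>M count_space UNIV)"

lemma classifier_one_minus:
  "classifier MX f \<Longrightarrow> classifier MX (\<lambda>x. 1 - f x)"
  by (auto simp: classifier_def)

lemma classifier_convex_comb:
  assumes f: "classifier MX f" and g: "classifier MX g"
    and u: "0 \<le> u" and v: "0 \<le> v" and uv: "u + v = 1"
  shows "classifier MX (\<lambda>x. u * f x + v * g x)"
proof -
  have "0 \<le> u * f x + v * g x \<and> u * f x + v * g x \<le> 1" if "x \<in> space MX" for x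
  proof -
    have "0 \<le> f x" "f x \<le> 1" "0 \<le> g x" "g x \<le> 1"
      using f g that by (auto simp: classifier_def)
    then have "u * f x \<le> u" "v * g x \<le> v"
      using u v by (simp_all add: mult_left_le)
    then show ?thesis
      using \<open>0 \<le> f x\<close> \<open>0 \<le> g x\<close> u v uv by simp
  qed
  then show ?thesis
    using f g by (auto simp: classifier_def)
qed

lemma space_eq_of_sets_eq_pair:
  "sets E = sets (MX \<Otimes>\<^sub>M count_space UNIV) \<Longrightarrow> space E = space MX \<times> UNIV"
  by (drule sets_eq_imp_space_eq) (simp add: space_pair_measure)

lemma integrable_FNR_FPR_integrands:
  assumes E: "finite_law_on MX E" and f: "classifier MX f"
  shows "integrable E (\<lambda>z. (1 - f (fst z)) * indicator {z. snd z} z)"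
    and "integrable E (\<lambda>z. f (fst z) * indicator {z. \<not> snd z} z)"
proof -
  interpret finite_measure E
    using E by (simp add: finite_law_on_def)
  have sE: "sets E = sets (MX \<Otimes>\<^sub>M count_space UNIV)"
    using E by (simp add: finite_law_on_def)
  have mf: "f \<in> borel_measurable MX"
    using f by (simp add: classifier_def)
  have bounds: "\<forall>z\<in>space E. 0 \<le> f (fst z) \<and> f (fst z) \<le> 1"
    using f space_eq_of_sets_eq_pair[OF sE] by (auto simp: classifier_def)
  have "(\<lambda>z. (1 - f (fst z)) * indicator {z. snd z} z :: real) \<in> borel_measurable E"
    unfolding measurable_cong_sets[OF sE refl] using mf by measurable
  then show "integrable E (\<lambda>z. (1 - f (fst z)) * indicator {z. snd z} z)"
    by (rule integrable_const_bound[where B=1, rotated]) (use bounds in \<open>auto simp: indicator_def\<close>)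
  have "(\<lambda>z. f (fst z) * indicator {z. \<not> snd z} z :: real) \<in> borel_measurable E"
    unfolding measurable_cong_sets[OF sE refl] using mf by measurable
  then show "integrable E (\<lambda>z. f (fst z) * indicator {z. \<not> snd z} z)"
    by (rule integrable_const_bound[where B=1, rotated]) (use bounds in \<open>auto simp: indicator_def\<close>)
qed

lemma CS_convex_comb:
  assumes E: "finite_law_on MX E" and f: "classifier MX f" and g: "classifier MX g"
    and uv: "u + v = 1"
  shows "CS (\<lambda>x. u * f x + v * g x) E c = u * CS f E c + v * CS g E c"
proof -
  note fi = integrable_FNR_FPR_integrands[OF E f]
  note gi = integrable_FNR_FPR_integrands[OF E g]
  have "1 - (u * a + v * b) = u * (1 - a) + v * (1 - b)" for a b :: real
    using uv by (simp add: algebra_simps)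
  then have neg: "(\<lambda>z. (1 - (u * f (fst z) + v * g (fst z))) * indicator {z. snd z} z)
      = (\<lambda>z. u * ((1 - f (fst z)) * indicator {z. snd z} z)
           + v * ((1 - g (fst z)) * indicator {z. snd z} z))"
    by (simp only: distrib_right mult.assoc)
  have pos: "(\<lambda>z. (u * f (fst z) + v * g (fst z)) * indicator {z. \<not> snd z} z)
      = (\<lambda>z. u * (f (fst z) * indicator {z. \<not> snd z} z) + v * (g (fst z) * indicator {z. \<not> snd z} z))"
    by (simp add: fun_eq_iff algebra_simps)
  show ?thesis
    unfolding CS_def FNR_def FPR_def neg pos
    using fi gi by (simp add: add_divide_distrib distrib_left)
qed

lemma CS_nonneg:
  assumes sE: "sets E = sets (MX \<Otimes>\<^sub>M count_space UNIV)"
    and f: "classifier MX f" and c: "0 \<le> c" "c \<le> 1"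
  shows "0 \<le> CS f E c"
proof -
  have bounds: "\<forall>z\<in>space E. 0 \<le> f (fst z) \<and> f (fst z) \<le> 1"
    using f space_eq_of_sets_eq_pair[OF sE] by (auto simp: classifier_def)
  have X: "0 \<le> (\<integral>z. (1 - f (fst z)) * indicator {z. snd z} z \<partial>E)"
    and Y: "0 \<le> (\<integral>z. f (fst z) * indicator {z. \<not> snd z} z \<partial>E)"
    using bounds by (auto simp: indicator_def intro!: Bochner_Integration.integral_nonneg)
  have ratio: "0 \<le> p * (X / p)" if "0 \<le> X" for p X :: real
    using that by (cases "p = 0") auto
  have "0 \<le> (1 - c) * (pZ E * ((\<integral>z. (1 - f (fst z)) * indicator {z. snd z} z \<partial>E) / pZ E))
      + c * ((1 - pZ E) * ((\<integral>z. f (fst z) * indicator {z. \<not> snd z} z \<partial>E) / (1 - pZ E)))"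
    using c by (intro add_nonneg_nonneg mult_nonneg_nonneg ratio X Y) simp_all
  then show ?thesis
    unfolding CS_def FNR_def FPR_def by (simp only: ac_simps)
qed

lemma CSd_convex_comb_ge:
  assumes E: "finite_law_on MX E" and f: "classifier MX f" and g: "classifier MX g"
    and u: "0 \<le> u" and v: "0 \<le> v" and uv: "u + v = 1"
  shows "u * CSd f E c + v * CSd g E c \<le> CSd (\<lambda>x. u * f x + v * g x) E c"
proof -
  have flip: "(\<lambda>x. 1 - (u * f x + v * g x)) = (\<lambda>x. u * (1 - f x) + v * (1 - g x))"
    using uv by (auto simp: fun_eq_iff algebra_simps)
  have "CS (\<lambda>x. 1 - (u * f x + v * g x)) E c
      = u * CS (\<lambda>x. 1 - f x) E c + v * CS (\<lambda>x. 1 - g x) E c"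
    unfolding flip using E f g uv by (intro CS_convex_comb classifier_one_minus)
  moreover have "CS (\<lambda>x. u * f x + v * g x) E c = u * CS f E c + v * CS g E c"
    using E f g uv by (rule CS_convex_comb)
  moreover have "min (u * a + v * b) (u * a' + v * b') \<ge> u * min a a' + v * min b b'"
    for a a' b b' :: real
    using u v by (simp add: add_mono mult_left_mono)
  ultimately show ?thesis
    unfolding CSd_def by simp
qed

lemma feasible_convex_comb:
  assumes Db: "finite_law_on MX Db"
    and f: "f \<in> feasible MX Db cb \<tau>\<^sub>1" and g: "g \<in> feasible MX Db cb \<tau>\<^sub>2"
    and u: "0 \<le> u" and v: "0 \<le> v" and uv: "u + v = 1"
  shows "(\<lambda>x. u * f x + v * g x) \<in> feasible MX Db cb (u * \<tau>\<^sub>1 + v * \<tau>\<^sub>2)"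
proof -
  have cf: "classifier MX f" and cg: "classifier MX g"
    using f g by (auto simp: feasible_def)
  have "u * \<tau>\<^sub>1 + v * \<tau>\<^sub>2 \<le> u * CSd f Db cb + v * CSd g Db cb"
    using f g u v by (auto simp: feasible_def intro!: add_mono mult_left_mono)
  also have "\<dots> \<le> CSd (\<lambda>x. u * f x + v * g x) Db cb"
    using Db cf cg u v uv by (rule CSd_convex_comb_ge)
  finally show ?thesis
    using classifier_convex_comb[OF cf cg u v uv] by (simp add: feasible_def)
qed

lemma convex_feasible_levels:
  assumes Db: "finite_law_on MX Db"
  shows "convex {\<tau>. 0 \<le> \<tau> \<and> feasible MX Db cb \<tau> \<noteq> {}}"
proof (rule convexI)
  fix \<tau>\<^sub>1 \<tau>\<^sub>2 u v :: real
  assume \<tau>\<^sub>1: "\<tau>\<^sub>1 \<in> {\<tau>. 0 \<le> \<tau> \<and> feasible MX Db cb \<tau> \<noteq> {}}"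
    and \<tau>\<^sub>2: "\<tau>\<^sub>2 \<in> {\<tau>. 0 \<le> \<tau> \<and> feasible MX Db cb \<tau> \<noteq> {}}"
    and u: "0 \<le> u" and v: "0 \<le> v" and uv: "u + v = 1"
  then obtain f g where "f \<in> feasible MX Db cb \<tau>\<^sub>1" "g \<in> feasible MX Db cb \<tau>\<^sub>2"
    by auto
  then have "feasible MX Db cb (u * \<tau>\<^sub>1 + v * \<tau>\<^sub>2) \<noteq> {}"
    using feasible_convex_comb[OF Db _ _ u v uv] by blast
  then show "u *\<^sub>R \<tau>\<^sub>1 + v *\<^sub>R \<tau>\<^sub>2 \<in> {\<tau>. 0 \<le> \<tau> \<and> feasible MX Db cb \<tau> \<noteq> {}}"
    using \<tau>\<^sub>1 \<tau>\<^sub>2 u v by simp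
qed

lemma le_convex_comb_Inf:
  fixes A B :: "real set"
  assumes "A \<noteq> {}" "B \<noteq> {}" "0 \<le> u" "0 \<le> v" "u + v = 1"
    and "\<And>a b. a \<in> A \<Longrightarrow> b \<in> B \<Longrightarrow> t \<le> u * a + v * b"
  shows "t \<le> u * Inf A + v * Inf B"
proof (rule field_le_epsilon)
  fix e :: real
  assume e: "0 < e"
  obtain a where a: "a \<in> A" "a < Inf A + e"
    using cInf_lessD[OF assms(1), of "Inf A + e"] e by auto
  obtain b where b: "b \<in> B" "b < Inf B + e"
    using cInf_lessD[OF assms(2), of "Inf B + e"] e by auto
  have "t \<le> u * a + v * b"
    using assms(6) a b by auto
  also have "\<dots> \<le> u * (Inf A + e) + v * (Inf B + e)"
    using a b assms(3,4) by (intro add_mono mult_left_mono) auto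
  also have "\<dots> = u * Inf A + v * Inf B + e"
    using assms(5) by (simp add: algebra_simps flip: distrib_left)
  finally show "t \<le> u * Inf A + v * Inf B + e" .
qed

lemma convex_on_V:
  assumes D: "finite_law_on MX D" and Db: "finite_law_on MX Db"
    and c: "0 \<le> c" "c \<le> 1"
  shows "convex_on {\<tau>. 0 \<le> \<tau> \<and> feasible MX Db cb \<tau> \<noteq> {}} (V MX D c Db cb)"
  unfolding convex_on_def
proof (intro conjI convex_feasible_levels[OF Db] ballI allI impI)
  fix \<tau>\<^sub>1 \<tau>\<^sub>2 u v :: real
  assume \<tau>\<^sub>1: "\<tau>\<^sub>1 \<in> {\<tau>. 0 \<le> \<tau> \<and> feasible MX Db cb \<tau> \<noteq> {}}"
    and \<tau>\<^sub>2: "\<tau>\<^sub>2 \<in> {\<tau>. 0 \<le> \<tau> \<and> feasible MX Db cb \<tau> \<noteq> {}}"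
    and u: "0 \<le> u" and v: "0 \<le> v" and uv: "u + v = 1"
  have bdd: "bdd_below ((\<lambda>f. CS f D c) ` feasible MX Db cb \<tau>)" for \<tau>
    using D c by (auto simp: feasible_def finite_law_on_def intro!: bdd_belowI[where m=0] CS_nonneg)
  have "V MX D c Db cb (u * \<tau>\<^sub>1 + v * \<tau>\<^sub>2) \<le> u * V MX D c Db cb \<tau>\<^sub>1 + v * V MX D c Db cb \<tau>\<^sub>2"
    unfolding V_def
  proof (rule le_convex_comb_Inf[OF _ _ u v uv])
    fix a b
    assume "a \<in> (\<lambda>f. CS f D c) ` feasible MX Db cb \<tau>\<^sub>1" "b \<in> (\<lambda>f. CS f D c) ` feasible MX Db cb \<tau>\<^sub>2"
    then obtain f g where f: "f \<in> feasible MX Db cb \<tau>\<^sub>1" "a = CS f D c"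
      and g: "g \<in> feasible MX Db cb \<tau>\<^sub>2" "b = CS g D c"
      by auto
    have "Inf ((\<lambda>f. CS f D c) ` feasible MX Db cb (u * \<tau>\<^sub>1 + v * \<tau>\<^sub>2))
        \<le> CS (\<lambda>x. u * f x + v * g x) D c"
      by (rule cInf_lower[OF imageI[OF feasible_convex_comb[OF Db f(1) g(1) u v uv]] bdd])
    also have "\<dots> = u * a + v * b"
      using f g D uv by (simp add: feasible_def CS_convex_comb)
    finally show "Inf ((\<lambda>f. CS f D c) ` feasible MX Db cb (u * \<tau>\<^sub>1 + v * \<tau>\<^sub>2)) \<le> u * a + v * b" .
  qed (use \<tau>\<^sub>1 \<tau>\<^sub>2 in auto)
  then show "V MX D c Db cb (u *\<^sub>R \<tau>\<^sub>1 + v *\<^sub>R \<tau>\<^sub>2) \<le> u * V MX D c Db cb \<tau>\<^sub>1 + v * V MX D c Db cb \<tau>\<^sub>2"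
    by simp
qed

lemma finite_measure_uniform_measure:
  assumes "finite_measure M" and A: "A \<in> sets M"
  shows "finite_measure (uniform_measure M A)"
proof (rule finite_measureI)
  interpret finite_measure M by fact
  have "emeasure (uniform_measure M A) (space (uniform_measure M A)) = emeasure M A / emeasure M A"
    using A sets.sets_into_space[OF A] by (simp add: Int_absorb2)
  also have "\<dots> \<noteq> \<infinity>"
    by (cases "emeasure M A = 0") (simp_all add: emeasure_finite less_top[symmetric])
  finally show "emeasure (uniform_measure M A) (space (uniform_measure M A)) \<noteq> \<infinity>" .
qed

lemma finite_law_on_distr:
  assumes "finite_measure M" and "h \<in> measurable M (MX \<Otimes>\<^sub>M count_space UNIV)"
  shows "finite_law_on MX (distr M (MX \<Otimes>\<^sub>M count_space UNIV) h)"
  using finite_measure.finite_measure_distr[OF assms] by (simp add: finite_law_on_def)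

context
  fixes MX :: "'x measure" and Dj :: "('x \<times> bool \<times> bool) measure"
  assumes fin: "finite_measure Dj"
    and sDj: "sets Dj = sets (MX \<Otimes>\<^sub>M count_space UNIV \<Otimes>\<^sub>M count_space UNIV)"
begin

lemma finite_law_on_D_of: "finite_law_on MX (D_of MX Dj)"
  unfolding D_of_def
  by (rule finite_law_on_distr[OF fin]) (simp add: measurable_cong_sets[OF sDj refl])

lemma finite_law_on_D_DP: "finite_law_on MX (D_DP MX Dj)"
  unfolding D_DP_def
  by (rule finite_law_on_distr[OF fin]) (simp add: measurable_cong_sets[OF sDj refl])

lemma finite_law_on_D_EO: "finite_law_on MX (D_EO MX Dj)"
proof -
  have A: "{w \<in> space Dj. snd (snd w)} \<in> sets Dj"
    unfolding sets_eq_imp_space_eq[OF sDj] sDj by measurable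
  have m: "(\<lambda>(x, yb, y). (x, yb)) \<in> measurable Dj (MX \<Otimes>\<^sub>M count_space UNIV)"
    by (simp add: measurable_cong_sets[OF sDj refl])
  show ?thesis
    unfolding D_EO_def
    by (rule finite_law_on_distr[OF finite_measure_uniform_measure[OF fin A]]) (use m in simp)
qed

end

theorem lemma4:
  fixes MX :: "'x measure" and Dj :: "('x \<times> bool \<times> bool) measure"
    and Db :: "('x \<times> bool) measure" and c cb :: real
  assumes "prob_space Dj"
    and "sets Dj = sets (MX \<Otimes>\<^sub>M count_space UNIV \<Otimes>\<^sub>M count_space UNIV)"
    and "0 \<le> c" "c \<le> 1" "0 \<le> cb" "cb \<le> 1"
    and "Db \<in> {D_DP MX Dj, D_EO MX Dj}"
  shows "convex_on {\<tau>. 0 \<le> \<tau> \<and> feasible MX Db cb \<tau> \<noteq> {}} (frontier MX (D_of MX Dj) c Db cb)"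
proof -
  have fin: "finite_measure Dj"
    using assms(1) by (simp add: prob_space_def)
  have "finite_law_on MX Db"
    using assms(7) finite_law_on_D_DP[OF fin assms(2)] finite_law_on_D_EO[OF fin assms(2)] by auto
  then have "convex_on {\<tau>. 0 \<le> \<tau> \<and> feasible MX Db cb \<tau> \<noteq> {}} (V MX (D_of MX Dj) c Db cb)"
    using finite_law_on_D_of[OF fin assms(2)] assms(3,4) by (intro convex_on_V)
  then show ?thesis
    unfolding frontier_def
    by (intro convex_on_diff) (simp_all add: concave_on_const convex_on_imp_convex)
qed

end
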